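(* Let $(G,\cdot)$ be a group, let $A$ be an abelian subgroup of $G$, and let $\mathcal{A}=\{\psi\in\operatorname{End}(G):\psi(G)\le A\}$. For $\psi\in\mathcal{A}$ define $g\circ_\psi h=g\cdot\psi(g)\cdot h\cdot\psi(g)^{-1}$. Then $(\circ_\psi:\psi\in\mathcal{A})$ is a brace block on $G$.
   Context: A skew brace is a triple $(G,\cdot,\circ)$ where $(G,\cdot)$ and $(G,\circ)$ are groups and $g\circ(h\cdot k)=(g\circ h)\cdot g^{-1}\cdot(g\circ k)$ for all $g,h,k$ ($g^{-1}$ the inverse for $\cdot$). A bi-skew brace is a triple $(G,\cdot,\circ)$ such that both $(G,\cdot,\circ)$ and $(G,\circ,\cdot)$ are skew braces. A brace block on a set $G$ is a family $\mathcal{F}$ of group operations on $G$ such that $(G,\circ,\diamond)$ is a bi-skew brace for all $\circ,\diamond\in\mathcal{F}$. *)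

theory Defs
  imports "HOL-Algebra.Group"
begin

definition group_of :: "'a set \<Rightarrow> ('a \<Rightarrow> 'a \<Rightarrow> 'a) \<Rightarrow> 'a monoid" where
  "group_of S f = \<lparr>carrier = S, mult = f,
     one = (THE e. e \<in> S \<and> (\<forall>x\<in>S. f e x = x \<and> f x e = x))\<rparr>"

definition is_group_op :: "'a set \<Rightarrow> ('a \<Rightarrow> 'a \<Rightarrow> 'a) \<Rightarrow> bool" where
  "is_group_op S f \<longleftrightarrow> group (group_of S f)"

definition skew_brace :: "'a set \<Rightarrow> ('a \<Rightarrow> 'a \<Rightarrow> 'a) \<Rightarrow> ('a \<Rightarrow> 'a \<Rightarrow> 'a) \<Rightarrow> bool" where
  "skew_brace S dot circ \<longleftrightarrow> is_group_op S dot \<and> is_group_op S circ \<and>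
     (\<forall>g\<in>S. \<forall>h\<in>S. \<forall>k\<in>S.
        circ g (dot h k) = dot (dot (circ g h) (inv\<^bsub>group_of S dot\<^esub> g)) (circ g k))"

definition bi_skew_brace :: "'a set \<Rightarrow> ('a \<Rightarrow> 'a \<Rightarrow> 'a) \<Rightarrow> ('a \<Rightarrow> 'a \<Rightarrow> 'a) \<Rightarrow> bool" where
  "bi_skew_brace S dot circ \<longleftrightarrow> skew_brace S dot circ \<and> skew_brace S circ dot"

definition brace_block :: "'a set \<Rightarrow> ('a \<Rightarrow> 'a \<Rightarrow> 'a) set \<Rightarrow> bool" where
  "brace_block S F \<longleftrightarrow> (\<forall>o1\<in>F. \<forall>o2\<in>F. bi_skew_brace S o1 o2)"

definition psi_op :: "('a, 'b) monoid_scheme \<Rightarrow> ('a \<Rightarrow> 'a) \<Rightarrow> 'a \<Rightarrow> 'a \<Rightarrow> 'a" where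
  "psi_op G \<psi> g h = g \<otimes>\<^bsub>G\<^esub> \<psi> g \<otimes>\<^bsub>G\<^esub> h \<otimes>\<^bsub>G\<^esub> inv\<^bsub>G\<^esub> (\<psi> g)"

end

theory Submission
  imports Defs
begin

text \<open>Every \<open>\<phi> \<in> \<A>\<close> is multiplicative from
  \<open>\<circ>\<^sub>\<psi>\<close> to \<open>\<cdot>\<close>, because \<open>\<phi>(\<psi>(g))\<close> and \<open>\<phi>(h)\<close> commute in \<open>A\<close>; this makes each \<open>\<circ>\<^sub>\<psi>\<close> a group
  operation. For two maps \<open>\<phi>, \<psi> \<in> \<A>\<close> one has \<open>g \<circ>\<^sub>\<psi> h = g \<circ>\<^sub>\<phi> (a h a\<inverse>)\<close> with
  \<open>a = \<phi>(g)\<inverse> \<psi>(g) \<in> A\<close>, and conjugation by an element of \<open>A\<close> is an automorphism of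
  \<open>(G, \<circ>\<^sub>\<phi>)\<close>. Hence \<open>h \<mapsto> g \<circ>\<^sub>\<psi> h\<close> is left multiplication by \<open>g\<close> after an automorphism of
  \<open>(G, \<circ>\<^sub>\<phi>)\<close>, which is exactly the skew brace identity for \<open>(\<circ>\<^sub>\<phi>, \<circ>\<^sub>\<psi>)\<close>.\<close>

lemma carrier_group_of [simp]: "carrier (group_of S f) = S"
  and mult_group_of [simp]: "mult (group_of S f) = f"
  by (simp_all add: group_of_def)

lemma one_group_of:
  assumes "e \<in> S" and "\<And>x. x \<in> S \<Longrightarrow> f e x = x \<and> f x e = x"
  shows "one (group_of S f) = e"
  unfolding group_of_def by (auto intro!: the_equality simp: assms) (metis assms)

lemma is_group_opI:
  assumes closed: "\<And>x y. x \<in> S \<Longrightarrow> y \<in> S \<Longrightarrow> f x y \<in> S"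
    and assoc: "\<And>x y z. x \<in> S \<Longrightarrow> y \<in> S \<Longrightarrow> z \<in> S \<Longrightarrow> f (f x y) z = f x (f y z)"
    and unit: "e \<in> S" "\<And>x. x \<in> S \<Longrightarrow> f e x = x \<and> f x e = x"
    and left_inv: "\<And>x. x \<in> S \<Longrightarrow> \<exists>y\<in>S. f y x = e"
  shows "is_group_op S f"
  unfolding is_group_op_def
  by (rule groupI) (simp_all add: one_group_of[OF unit] closed assoc unit left_inv)

lemma (in group) m_inv_cancel_left [simp]:
  "x \<in> carrier G \<Longrightarrow> y \<in> carrier G \<Longrightarrow> x \<otimes> (inv x \<otimes> y) = y"
  by (simp add: m_assoc[symmetric])

lemma (in group) inv_m_cancel_left [simp]:
  "x \<in> carrier G \<Longrightarrow> y \<in> carrier G \<Longrightarrow> inv x \<otimes> (x \<otimes> y) = y"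
  by (simp add: m_assoc[symmetric])

lemma (in group) m_assoc_inv_insert:
  assumes "x \<in> carrier G" "y \<in> carrier G" "z \<in> carrier G"
  shows "x \<otimes> (y \<otimes> z) = x \<otimes> y \<otimes> inv x \<otimes> (x \<otimes> z)"
  using assms by (simp add: m_assoc)

locale group_with_abelian_subgroup = group G for G (structure) +
  fixes A :: "'a set"
  assumes subgroup_A: "subgroup A G"
    and comm_A: "\<forall>x\<in>A. \<forall>y\<in>A. x \<otimes> y = y \<otimes> x"
begin

definition endos_into_A :: "('a \<Rightarrow> 'a) set" where
  "endos_into_A = {\<psi> \<in> hom G G. \<psi> ` carrier G \<subseteq> A}"

lemma A_closed: "a \<in> A \<Longrightarrow> a \<in> carrier G"
  using subgroup.subset[OF subgroup_A] by blast

lemma A_inv_closed: "a \<in> A \<Longrightarrow> inv a \<in> A"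
  by (rule subgroup.m_inv_closed[OF subgroup_A])

lemma A_m_closed: "a \<in> A \<Longrightarrow> b \<in> A \<Longrightarrow> a \<otimes> b \<in> A"
  by (rule subgroup.m_closed[OF subgroup_A])

lemma A_m_comm: "a \<in> A \<Longrightarrow> b \<in> A \<Longrightarrow> a \<otimes> b = b \<otimes> a"
  using comm_A by blast

lemma A_m_lcomm:
  "a \<in> A \<Longrightarrow> b \<in> A \<Longrightarrow> x \<in> carrier G \<Longrightarrow> a \<otimes> (b \<otimes> x) = b \<otimes> (a \<otimes> x)"
  by (metis A_closed A_m_comm m_assoc)

lemma conj_A_fixes_A: "a \<in> A \<Longrightarrow> b \<in> A \<Longrightarrow> a \<otimes> b \<otimes> inv a = b"
  using A_m_comm[of a b] by (simp add: A_closed m_assoc)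

context
  fixes \<phi> :: "'a \<Rightarrow> 'a"
  assumes \<phi>: "\<phi> \<in> endos_into_A"
begin

lemma endo_in_A: "x \<in> carrier G \<Longrightarrow> \<phi> x \<in> A"
  using \<phi> by (auto simp: endos_into_A_def)

lemma endo_closed: "x \<in> carrier G \<Longrightarrow> \<phi> x \<in> carrier G"
  using endo_in_A A_closed by blast

interpretation endo: group_hom G G \<phi>
  using \<phi> by unfold_locales (simp add: endos_into_A_def)

lemma endo_mult: "x \<in> carrier G \<Longrightarrow> y \<in> carrier G \<Longrightarrow> \<phi> (x \<otimes> y) = \<phi> x \<otimes> \<phi> y"
  by simp

lemma endo_inv: "x \<in> carrier G \<Longrightarrow> \<phi> (inv x) = inv (\<phi> x)"
  by simp

lemma endo_one: "\<phi> \<one> = \<one>"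
  by simp

lemma endo_conj_A: "a \<in> A \<Longrightarrow> x \<in> carrier G \<Longrightarrow> \<phi> (a \<otimes> x \<otimes> inv a) = \<phi> x"
  using A_closed endo_closed conj_A_fixes_A[OF endo_in_A endo_in_A] by simp

lemma psi_op_closed:
  "g \<in> carrier G \<Longrightarrow> h \<in> carrier G \<Longrightarrow> psi_op G \<phi> g h \<in> carrier G"
  by (simp add: psi_op_def endo_closed)

end

lemma endo_psi_op_mult:
  assumes \<phi>: "\<phi> \<in> endos_into_A" and \<psi>: "\<psi> \<in> endos_into_A"
    and g: "g \<in> carrier G" and h: "h \<in> carrier G"
  shows "\<phi> (psi_op G \<psi> g h) = \<phi> g \<otimes> \<phi> h"
proof -
  have "\<phi> (psi_op G \<psi> g h) = \<phi> g \<otimes> \<phi> (\<psi> g \<otimes> h \<otimes> inv (\<psi> g))"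
    using g h endo_closed[OF \<psi>] by (simp add: psi_op_def m_assoc endo_mult[OF \<phi>])
  also have "\<dots> = \<phi> g \<otimes> \<phi> h"
    using h endo_conj_A[OF \<phi> endo_in_A[OF \<psi> g]] by simp
  finally show ?thesis .
qed

context
  fixes \<psi> :: "'a \<Rightarrow> 'a"
  assumes \<psi>: "\<psi> \<in> endos_into_A"
begin

lemma psi_op_assoc:
  assumes "x \<in> carrier G" "y \<in> carrier G" "z \<in> carrier G"
  shows "psi_op G \<psi> (psi_op G \<psi> x y) z = psi_op G \<psi> x (psi_op G \<psi> y z)"
  using assms endo_psi_op_mult[OF \<psi> \<psi>] endo_closed[OF \<psi>]
  by (simp add: psi_op_def m_assoc inv_mult_group)

lemma psi_op_unit:
  "x \<in> carrier G \<Longrightarrow> psi_op G \<psi> \<one> x = x \<and> psi_op G \<psi> x \<one> = x"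
  using endo_closed[OF \<psi>] by (simp add: psi_op_def endo_one[OF \<psi>] m_assoc)

lemma psi_op_left_inv:
  assumes g: "g \<in> carrier G"
  shows "psi_op G \<psi> (inv (\<psi> g) \<otimes> inv g \<otimes> \<psi> g) g = \<one>"
proof -
  have "\<psi> (inv (\<psi> g) \<otimes> inv g \<otimes> \<psi> g) = inv (\<psi> (\<psi> g)) \<otimes> inv (\<psi> g) \<otimes> \<psi> (\<psi> g)"
    using g endo_closed[OF \<psi>] by (simp add: endo_mult[OF \<psi>] endo_inv[OF \<psi>])
  also have "\<dots> = inv (\<psi> g)"
    using g endo_in_A[OF \<psi>] A_closed A_inv_closed by (simp add: A_m_comm m_assoc)
  finally show ?thesis
    using g endo_closed[OF \<psi>] by (simp add: psi_op_def m_assoc)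
qed

lemma is_group_op_psi_op: "is_group_op (carrier G) (psi_op G \<psi>)"
proof (rule is_group_opI[OF psi_op_closed[OF \<psi>] psi_op_assoc one_closed psi_op_unit])
  fix g assume "g \<in> carrier G"
  then show "\<exists>y\<in>carrier G. psi_op G \<psi> y g = \<one>"
    using psi_op_left_inv endo_closed[OF \<psi>] by blast
qed

end

lemma conj_A_hom_psi_op:
  assumes \<phi>: "\<phi> \<in> endos_into_A" and a: "a \<in> A"
    and h: "h \<in> carrier G" and k: "k \<in> carrier G"
  shows "a \<otimes> psi_op G \<phi> h k \<otimes> inv a = psi_op G \<phi> (a \<otimes> h \<otimes> inv a) (a \<otimes> k \<otimes> inv a)"
proof -
  have \<phi>h: "\<phi> h \<in> A" using endo_in_A[OF \<phi> h] .
  have \<phi>_conj: "\<phi> (a \<otimes> (h \<otimes> inv a)) = \<phi> h"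
    using endo_conj_A[OF \<phi> a h] a h A_closed by (simp add: m_assoc)
  have cancel: "inv a \<otimes> (\<phi> h \<otimes> (a \<otimes> x)) = \<phi> h \<otimes> x" if "x \<in> carrier G" for x
    using that a \<phi>h A_closed by (simp add: A_m_lcomm)
  have inv_comm: "inv a \<otimes> inv (\<phi> h) = inv (\<phi> h) \<otimes> inv a"
    using a \<phi>h by (simp add: A_m_comm A_inv_closed)
  show ?thesis
    using a h k A_closed endo_closed[OF \<phi>]
    by (simp add: psi_op_def m_assoc inv_mult_group \<phi>_conj cancel inv_comm)
qed

lemma psi_op_via_conj:
  assumes \<phi>: "\<phi> \<in> endos_into_A" and \<psi>: "\<psi> \<in> endos_into_A"
    and g: "g \<in> carrier G" and h: "h \<in> carrier G"
    and a_def: "a = inv (\<phi> g) \<otimes> \<psi> g"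
  shows "psi_op G \<psi> g h = psi_op G \<phi> g (a \<otimes> h \<otimes> inv a)"
  using g h endo_closed[OF \<phi>] endo_closed[OF \<psi>]
  by (simp add: a_def psi_op_def m_assoc inv_mult_group)

lemma skew_brace_psi_op:
  assumes \<phi>: "\<phi> \<in> endos_into_A" and \<psi>: "\<psi> \<in> endos_into_A"
  shows "skew_brace (carrier G) (psi_op G \<phi>) (psi_op G \<psi>)"
proof -
  interpret H: group "group_of (carrier G) (psi_op G \<phi>)"
    using is_group_op_psi_op[OF \<phi>] by (simp add: is_group_op_def)
  have "psi_op G \<psi> g (psi_op G \<phi> h k) =
      psi_op G \<phi> (psi_op G \<phi> (psi_op G \<psi> g h) (inv\<^bsub>group_of (carrier G) (psi_op G \<phi>)\<^esub> g))
        (psi_op G \<psi> g k)"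
    if g: "g \<in> carrier G" and h: "h \<in> carrier G" and k: "k \<in> carrier G" for g h k
  proof -
    define a where "a = inv (\<phi> g) \<otimes> \<psi> g"
    have a: "a \<in> A"
      unfolding a_def using g endo_in_A[OF \<phi>] endo_in_A[OF \<psi>] A_inv_closed A_m_closed by blast
    let ?c = "\<lambda>x. a \<otimes> x \<otimes> inv a"
    have c_closed: "?c x \<in> carrier G" if "x \<in> carrier G" for x
      using that a A_closed by simp
    have "psi_op G \<psi> g (psi_op G \<phi> h k) = psi_op G \<phi> g (?c (psi_op G \<phi> h k))"
      using psi_op_via_conj[OF \<phi> \<psi> g psi_op_closed[OF \<phi> h k] a_def] .
    also have "\<dots> = psi_op G \<phi> g (psi_op G \<phi> (?c h) (?c k))"
      using conj_A_hom_psi_op[OF \<phi> a h k] by simp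
    also have "\<dots> = psi_op G \<phi> (psi_op G \<phi> (psi_op G \<phi> g (?c h))
        (inv\<^bsub>group_of (carrier G) (psi_op G \<phi>)\<^esub> g)) (psi_op G \<phi> g (?c k))"
      using H.m_assoc_inv_insert[of g "?c h" "?c k"] g h k c_closed by simp
    also have "\<dots> = psi_op G \<phi> (psi_op G \<phi> (psi_op G \<psi> g h)
        (inv\<^bsub>group_of (carrier G) (psi_op G \<phi>)\<^esub> g)) (psi_op G \<psi> g k)"
      using psi_op_via_conj[OF \<phi> \<psi> g _ a_def] h k by simp
    finally show ?thesis .
  qed
  then show ?thesis
    unfolding skew_brace_def using is_group_op_psi_op \<phi> \<psi> by blast
qed

end

theorem mainTheorem7:
  fixes G :: "('a, 'b) monoid_scheme" and A :: "'a set"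
  assumes "group G"
    and "subgroup A G"
    and "\<forall>x\<in>A. \<forall>y\<in>A. x \<otimes>\<^bsub>G\<^esub> y = y \<otimes>\<^bsub>G\<^esub> x"
  shows "brace_block (carrier G) ((\<lambda>\<psi>. psi_op G \<psi>) ` {\<psi> \<in> hom G G. \<psi> ` carrier G \<subseteq> A})"
proof -
  interpret group_with_abelian_subgroup G A
    using assms by (simp add: group_with_abelian_subgroup_def group_with_abelian_subgroup_axioms_def)
  show ?thesis
    unfolding brace_block_def bi_skew_brace_def
    using skew_brace_psi_op by (auto simp: endos_into_A_def)
qed

end
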